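(* Let $b>3$ and let $f:B(b)\to\mathbb{C}$ be a conformal embedding (injective holomorphic map) with $f(0)=0$ and $f(z+1)=f(z)+1$ for all $z\in B(b)$. Then for every $z=x+iy\in B(b-3)$, $$|f''(z)|\le C_2\,e^{2\pi(|y|-b)},$$ where $C_1=\sqrt{8/\pi}$ and $C_2=8\pi e^{5\pi}(C_1+1)$.
   Context: $B(b)=\{z\in\mathbb{C}:|\operatorname{Im}z|<b\}$. *)

theory Defs
  imports "HOL-Complex_Analysis.Complex_Analysis"
begin

definition strip :: "real \<Rightarrow> complex set" where
  "strip b = {z. \<bar>Im z\<bar> < b}"

definition C1 :: real where "C1 = sqrt (8 / pi)"
definition C2 :: real where "C2 = 8 * pi * exp (5 * pi) * (C1 + 1)"

end

theory Submission
  imports Defs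
begin

text \<open>Since \<open>f(z + 1) = f z + 1\<close> and \<open>f\<close> is injective, Bloch's theorem bounds \<open>\<bar>f'\<bar>\<close> by 12
  on \<open>\<bar>Im z\<bar> \<le> b - 1/2\<close>. The derivative \<open>f'\<close> is 1-periodic, hence of the form
  \<open>P (exp (2\<pi>iz))\<close> with \<open>P\<close> holomorphic on the annulus \<open>exp (-2\<pi>b) < \<bar>w\<bar> < exp (2\<pi>b)\<close>.
  Cauchy's formula for \<open>P'\<close> on the closed annulus bounded by the images of the lines
  \<open>\<bar>Im z\<bar> = b - 1/2\<close>, together with the chain rule, gives the exponential decay of \<open>f''\<close>.\<close>

lemma has_contour_integral_minus_principal_part:
  assumes \<gamma>: "valid_path \<gamma>" "pathfinish \<gamma> = pathstart \<gamma>" "w \<notin> path_image \<gamma>"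
    and I: "((\<lambda>z. P z / (z - w)^2) has_contour_integral I) \<gamma>"
    and \<phi>: "\<And>z. z \<in> path_image \<gamma> \<Longrightarrow> \<phi> z = P z / (z - w)^2 - a / (z - w)^2 - c / (z - w)"
  shows "(\<phi> has_contour_integral (I - 2 * pi * \<i> * winding_number \<gamma> w * c)) \<gamma>"
proof -
  have "((\<lambda>z. a / (z - w)^2) has_contour_integral 0) \<gamma>"
  proof (rule Cauchy_theorem_primitive[of "- {w}" "\<lambda>z. - a / (z - w)"])
    fix z :: complex assume "z \<in> - {w}"
    then show "((\<lambda>z. - a / (z - w)) has_field_derivative a / (z - w)^2) (at z within - {w})"
      by (auto intro!: derivative_eq_intros simp: power2_eq_square field_simps)
  qed (use \<gamma> in auto)
  moreover have "((\<lambda>z. c / (z - w)) has_contour_integral c * (2 * pi * \<i> * winding_number \<gamma> w)) \<gamma>"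
    using has_contour_integral_lmul[OF has_contour_integral_winding_number[OF \<gamma>(1,3)], of c]
    by simp
  ultimately have "((\<lambda>z. P z / (z - w)^2 - a / (z - w)^2 - c / (z - w)) has_contour_integral
                     (I - 0 - c * (2 * pi * \<i> * winding_number \<gamma> w))) \<gamma>"
    by (intro has_contour_integral_diff I)
  then have "((\<lambda>z. P z / (z - w)^2 - a / (z - w)^2 - c / (z - w)) has_contour_integral
                (I - 2 * pi * \<i> * winding_number \<gamma> w * c)) \<gamma>"
    by (simp add: algebra_simps)
  then show ?thesis
    by (rule has_contour_integral_eq) (simp add: \<phi>)
qed

lemma homotopic_loops_circlepaths:
  assumes "0 < r" "r \<le> R" and sub: "\<And>\<zeta>. r \<le> cmod \<zeta> \<Longrightarrow> cmod \<zeta> \<le> R \<Longrightarrow> \<zeta> \<in> A"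
  shows "homotopic_loops A (circlepath 0 R) (circlepath 0 r)"
proof (rule homotopic_loops_linear)
  fix t :: real
  show "closed_segment (circlepath 0 R t) (circlepath 0 r t) \<subseteq> A"
  proof
    fix y assume "y \<in> closed_segment (circlepath 0 R t) (circlepath 0 r t)"
    then obtain u where u: "0 \<le> u" "u \<le> 1"
      and y: "y = (1 - u) *\<^sub>R circlepath 0 R t + u *\<^sub>R circlepath 0 r t"
      unfolding closed_segment_def by auto
    have "y = of_real ((1 - u) * R + u * r) * exp (2 * of_real pi * \<i> * of_real t)"
      by (simp add: y circlepath scaleR_conv_of_real algebra_simps)
    then have "cmod y = \<bar>(1 - u) * R + u * r\<bar>"
      by (simp only: norm_mult norm_of_real norm_exp_eq_Re) simp
    moreover have "r \<le> (1 - u) * R + u * r" "(1 - u) * R + u * r \<le> R"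
      using mult_left_mono[OF \<open>r \<le> R\<close>, of u] mult_left_mono[OF \<open>r \<le> R\<close>, of "1 - u"] u
      by (simp_all add: algebra_simps)
    ultimately show "y \<in> A" using sub \<open>0 < r\<close> by auto
  qed
qed auto

lemma deriv_eq_annulus_contour_integrals:
  fixes P :: "complex \<Rightarrow> complex"
  assumes holP: "P holomorphic_on A" and "open A"
    and r: "0 < r" "r < cmod w" "cmod w < R"
    and sub: "\<And>\<zeta>. r \<le> cmod \<zeta> \<Longrightarrow> cmod \<zeta> \<le> R \<Longrightarrow> \<zeta> \<in> A"
  shows "2 * pi * \<i> * deriv P w =
           contour_integral (circlepath 0 R) (\<lambda>z. P z / (z - w)^2)
         - contour_integral (circlepath 0 r) (\<lambda>z. P z / (z - w)^2)"
proof -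
  \<comment> \<open>The second difference quotient \<open>\<phi>\<close> is holomorphic on all of \<open>A\<close>, so its integrals over
    the two homotopic circles agree; off \<open>w\<close> it is \<open>P z / (z - w)\<^sup>2\<close> minus a principal part.\<close>
  define \<phi>1 where "\<phi>1 = (\<lambda>z. if z = w then deriv P w else (P z - P w) / (z - w))"
  define \<phi> where "\<phi> = (\<lambda>z. if z = w then deriv \<phi>1 w else (\<phi>1 z - \<phi>1 w) / (z - w))"
  have "\<phi>1 holomorphic_on A"
    unfolding \<phi>1_def using pole_lemma_open[OF holP \<open>open A\<close>] .
  then have hol\<phi>: "\<phi> holomorphic_on A"
    unfolding \<phi>_def using pole_lemma_open[OF _ \<open>open A\<close>] by blast
  have \<phi>_eq: "\<phi> z = P z / (z - w)^2 - P w / (z - w)^2 - deriv P w / (z - w)" if "z \<noteq> w" for z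
    using that by (simp add: \<phi>_def \<phi>1_def power2_eq_square divide_simps)
  have wn: "winding_number (circlepath 0 R) w = 1" "winding_number (circlepath 0 r) w = 0"
    using r by (auto intro!: winding_number_circlepath winding_number_zero_outside[of _ "cball 0 r"])
  have circle: "contour_integral (circlepath 0 \<rho>) \<phi> =
      contour_integral (circlepath 0 \<rho>) (\<lambda>z. P z / (z - w)^2)
      - 2 * pi * \<i> * winding_number (circlepath 0 \<rho>) w * deriv P w"
    if "\<rho> = r \<or> \<rho> = R" for \<rho>
  proof -
    have img: "path_image (circlepath 0 \<rho>) \<subseteq> A - {w}"
      using that r sub by (force simp: path_image_circlepath sphere_def dist_norm)
    have "(\<lambda>z. P z / (z - w)^2) holomorphic_on A - {w}"
      by (intro holomorphic_intros holomorphic_on_subset[OF holP]) auto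
    then have "(\<lambda>z. P z / (z - w)^2) contour_integrable_on circlepath 0 \<rho>"
      by (rule contour_integrable_holomorphic_simple) (use \<open>open A\<close> img in auto)
    then show ?thesis
      by (intro contour_integral_unique
          has_contour_integral_minus_principal_part[where P = P and a = "P w"]
          has_contour_integral_integral) (use img \<phi>_eq in \<open>auto simp: subset_iff\<close>)
  qed
  have "homotopic_loops A (circlepath 0 R) (circlepath 0 r)"
    using r sub by (intro homotopic_loops_circlepaths) auto
  then have "contour_integral (circlepath 0 R) \<phi> = contour_integral (circlepath 0 r) \<phi>"
    using Cauchy_theorem_homotopic_loops[OF _ \<open>open A\<close> hol\<phi>] by auto
  then show ?thesis
    using circle[of r] circle[of R] wn by (simp add: algebra_simps)
qed

lemma norm_contour_integral_circlepath_le: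
  fixes P :: "complex \<Rightarrow> complex"
  assumes "0 < \<rho>" "cmod w \<noteq> \<rho>" and bd: "\<And>\<zeta>. cmod \<zeta> = \<rho> \<Longrightarrow> cmod (P \<zeta>) \<le> M"
  shows "cmod (contour_integral (circlepath 0 \<rho>) (\<lambda>z. P z / (z - w)^2))
           \<le> 2 * pi * \<rho> * M / (\<rho> - cmod w)^2"
proof -
  have "cmod (P (of_real \<rho>)) \<le> M" using bd \<open>0 < \<rho>\<close> by simp
  then have M: "0 \<le> M" using norm_ge_zero order_trans by blast
  show ?thesis
  proof (cases "(\<lambda>z. P z / (z - w)^2) contour_integrable_on circlepath 0 \<rho>")
    case True
    have "cmod (contour_integral (circlepath 0 \<rho>) (\<lambda>z. P z / (z - w)^2))
            \<le> M / (\<rho> - cmod w)^2 * (2 * pi * \<rho>)"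
    proof (rule has_contour_integral_bound_circlepath[OF has_contour_integral_integral[OF True]])
      show "0 \<le> M / (\<rho> - cmod w)^2" using M by simp
      fix \<zeta> :: complex assume "cmod (\<zeta> - 0) = \<rho>"
      then have \<zeta>: "cmod \<zeta> = \<rho>" by simp
      have "\<bar>\<rho> - cmod w\<bar> \<le> cmod (\<zeta> - w)"
        using \<zeta> norm_triangle_ineq3[of \<zeta> w] by simp
      then have "(\<rho> - cmod w)^2 \<le> (cmod (\<zeta> - w))^2"
        by (metis abs_ge_zero power2_abs power_mono)
      moreover have "0 < (\<rho> - cmod w)^2" using assms(2) by simp
      ultimately show "cmod (P \<zeta> / (\<zeta> - w)^2) \<le> M / (\<rho> - cmod w)^2"
        using bd[OF \<zeta>] M by (simp add: norm_divide norm_power frac_le)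
    qed (use \<open>0 < \<rho>\<close> in auto)
    then show ?thesis by (simp add: field_simps)
  next
    case False
    with M \<open>0 < \<rho>\<close> show ?thesis by (simp add: not_integrable_contour_integral)
  qed
qed

lemma norm_deriv_le_annulus:
  fixes P :: "complex \<Rightarrow> complex"
  assumes "P holomorphic_on A" "open A"
    and r: "0 < r" "r < cmod w" "cmod w < R"
    and "\<And>\<zeta>. r \<le> cmod \<zeta> \<Longrightarrow> cmod \<zeta> \<le> R \<Longrightarrow> \<zeta> \<in> A"
    and bd: "\<And>\<zeta>. cmod \<zeta> = r \<or> cmod \<zeta> = R \<Longrightarrow> cmod (P \<zeta>) \<le> M"
  shows "cmod (deriv P w) \<le> M * (R / (R - cmod w)^2 + r / (cmod w - r)^2)"
proof -
  let ?I = "\<lambda>\<rho>. contour_integral (circlepath 0 \<rho>) (\<lambda>z. P z / (z - w)^2)"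
  have "2 * pi * cmod (deriv P w) = cmod (?I R - ?I r)"
    using arg_cong[OF deriv_eq_annulus_contour_integrals[OF assms(1-6)], of cmod]
    by (simp add: norm_mult)
  also have "\<dots> \<le> 2 * pi * R * M / (R - cmod w)^2 + 2 * pi * r * M / (r - cmod w)^2"
    using r bd
    by (intro order_trans[OF norm_triangle_ineq4 add_mono] norm_contour_integral_circlepath_le)
      auto
  also have "\<dots> = 2 * pi * (M * (R / (R - cmod w)^2 + r / (cmod w - r)^2))"
    by (simp add: power2_commute algebra_simps)
  finally show ?thesis by simp
qed

definition annulus :: "real \<Rightarrow> real \<Rightarrow> complex set" where
  "annulus r R = {w. r < cmod w \<and> cmod w < R}"

lemma open_annulus: "open (annulus r R)"
  unfolding annulus_def by (intro open_Collect_conj open_Collect_less continuous_intros)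

lemma open_strip: "open (strip b)"
  unfolding strip_def by (intro open_Collect_less continuous_intros)

lemma add_of_int_in_strip: "z \<in> strip b \<Longrightarrow> z + of_int n \<in> strip b"
  by (simp add: strip_def)

lemma Im_Ln_over_2pi_i: "w \<noteq> 0 \<Longrightarrow> Im (Ln w / (2 * pi * \<i>)) = - ln (cmod w) / (2 * pi)"
  by (simp add: Im_divide power2_eq_square)

lemma Ln_over_2pi_i_in_strip_iff:
  assumes "w \<noteq> 0"
  shows "Ln w / (2 * pi * \<i>) \<in> strip b \<longleftrightarrow> w \<in> annulus (exp (- 2 * pi * b)) (exp (2 * pi * b))"
proof -
  have "Ln w / (2 * pi * \<i>) \<in> strip b \<longleftrightarrow> \<bar>ln (cmod w)\<bar> < 2 * pi * b"
    unfolding strip_def mem_Collect_eq Im_Ln_over_2pi_i[OF assms]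
    using pi_gt_zero by (simp add: abs_divide divide_less_eq mult.commute)
  also have "\<dots> \<longleftrightarrow> w \<in> annulus (exp (- 2 * pi * b)) (exp (2 * pi * b))"
  proof -
    have "0 < cmod w" using assms by simp
    then have "exp t < cmod w \<longleftrightarrow> t < ln (cmod w)" "cmod w < exp t \<longleftrightarrow> ln (cmod w) < t" for t
      using exp_less_cancel_iff[of t "ln (cmod w)"] exp_less_cancel_iff[of "ln (cmod w)" t]
      by simp_all
    then show ?thesis by (simp add: annulus_def abs_less_iff minus_less_iff conj_commute)
  qed
  finally show ?thesis .
qed

lemma periodic_add_of_int:
  assumes per: "\<And>z. z \<in> strip b \<Longrightarrow> g (z + 1) = g z" and z: "z \<in> strip b"
  shows "g (z + of_int n) = g z"
proof -
  have nat: "g (u + of_nat k) = g u" if "u \<in> strip b" for u k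
  proof (induction k)
    case (Suc k)
    have "u + of_nat k \<in> strip b" using add_of_int_in_strip[OF that, of "int k"] by simp
    then have "g (u + of_nat k + 1) = g (u + of_nat k)" by (rule per)
    then show ?case using Suc.IH by (simp add: add_ac)
  qed simp
  show ?thesis
  proof (cases "0 \<le> n")
    case True
    then show ?thesis using nat[OF z, of "nat n"] by simp
  next
    case False
    have "z + of_int n \<in> strip b" by (rule add_of_int_in_strip[OF z])
    then have "g (z + of_int n + of_nat (nat (- n))) = g (z + of_int n)" by (rule nat)
    then show ?thesis using False by simp
  qed
qed

lemma periodic_eq_if_exp_eq:
  assumes per: "\<And>z. z \<in> strip b \<Longrightarrow> g (z + 1) = g z"
    and "u \<in> strip b" and "exp (2 * pi * \<i> * u) = exp (2 * pi * \<i> * v)"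
  shows "g u = g v"
proof -
  obtain n :: int where "2 * pi * \<i> * u = 2 * pi * \<i> * v + of_int (2 * n) * pi * \<i>"
    using assms(3) exp_eq by blast
  then have "2 * pi * \<i> * u = 2 * pi * \<i> * (v + of_int n)" by (simp add: algebra_simps)
  then have "v = u + of_int (- n)" by simp
  then show ?thesis using periodic_add_of_int[of b g, OF per \<open>u \<in> strip b\<close>, of "- n"] by simp
qed

lemma exp_2pi_i_in_annulus:
  assumes "z \<in> strip b"
  shows "exp (2 * pi * \<i> * z) \<in> annulus (exp (- 2 * pi * b)) (exp (2 * pi * b))"
proof -
  have "\<bar>Im z\<bar> < b" using assms by (simp add: strip_def)
  then have "2 * pi * Im z < 2 * pi * b" "2 * pi * (- Im z) < 2 * pi * b"
    using pi_gt_zero by (intro mult_strict_left_mono; simp)+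
  then show ?thesis by (simp add: annulus_def)
qed

lemma holomorphic_on_comp_Ln_over_2pi_i:
  fixes g :: "complex \<Rightarrow> complex"
  assumes hol: "g holomorphic_on strip b" and "cmod c = 1"
    and S: "\<And>w. w \<in> S \<Longrightarrow> w \<in> annulus (exp (- 2 * pi * b)) (exp (2 * pi * b)) \<and> c * w \<notin> \<real>\<^sub>\<le>\<^sub>0"
  shows "(\<lambda>w. g (Ln (c * w) / (2 * pi * \<i>) + of_real a)) holomorphic_on S"
proof -
  have "Ln (c * w) / (2 * pi * \<i>) + of_real a \<in> strip b" if "w \<in> S" for w
  proof -
    have "c * w \<noteq> 0" using S[OF that] by auto
    moreover have "c * w \<in> annulus (exp (- 2 * pi * b)) (exp (2 * pi * b))"
      using S[OF that] \<open>cmod c = 1\<close> by (simp add: annulus_def norm_mult)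
    ultimately have "Ln (c * w) / (2 * pi * \<i>) \<in> strip b"
      using Ln_over_2pi_i_in_strip_iff[of "c * w" b] by simp
    then show ?thesis by (simp add: strip_def)
  qed
  then have "(g \<circ> (\<lambda>w. Ln (c * w) / (2 * pi * \<i>) + of_real a)) holomorphic_on S"
    using S by (intro holomorphic_on_compose_gen[OF _ hol] holomorphic_intros) auto
  then show ?thesis by (simp add: o_def)
qed

lemma periodic_holomorphic_factor_exp:
  fixes g :: "complex \<Rightarrow> complex"
  assumes hol: "g holomorphic_on strip b" and per: "\<And>z. z \<in> strip b \<Longrightarrow> g (z + 1) = g z"
  obtains P where "P holomorphic_on annulus (exp (- 2 * pi * b)) (exp (2 * pi * b))"
    and "\<And>z. z \<in> strip b \<Longrightarrow> g z = P (exp (2 * pi * \<i> * z))"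
proof
  define A where "A = annulus (exp (- 2 * pi * b)) (exp (2 * pi * b))"
  define P where "P = (\<lambda>w. g (Ln w / (2 * pi * \<i>)))"
  define Q where "Q = (\<lambda>w. g (Ln (- w) / (2 * pi * \<i>) + 1 / 2))"
  have A_nz: "w \<noteq> 0" if "w \<in> A" for w
    using that by (auto simp: A_def annulus_def)
  have Ln_in_strip: "Ln w / (2 * pi * \<i>) \<in> strip b" if "w \<in> A" for w
    using that A_nz Ln_over_2pi_i_in_strip_iff by (simp add: A_def)
  show "g z = P (exp (2 * pi * \<i> * z))" if "z \<in> strip b" for z
    unfolding P_def using that exp_2pi_i_in_annulus[OF that] A_nz Ln_in_strip
    by (intro periodic_eq_if_exp_eq[where g = g, OF per]) (auto simp: A_def)
  \<comment> \<open>\<open>P\<close> uses the branch of \<open>Ln\<close> cut along the negative axis, \<open>Q\<close> the one cut along the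
    positive axis; they agree on \<open>A\<close> by periodicity.\<close>
  define A1 where "A1 = A \<inter> ({w. 0 < Re w} \<union> {w. Im w \<noteq> 0})"
  define A2 where "A2 = A \<inter> ({w. Re w < 0} \<union> {w. Im w \<noteq> 0})"
  have "open A" by (simp add: A_def open_annulus)
  then have "open A1" "open A2" unfolding A1_def A2_def
    by (intro open_Int open_Un open_Collect_less open_Collect_neq continuous_intros; simp)+
  have "w \<in> A \<and> 1 * w \<notin> \<real>\<^sub>\<le>\<^sub>0" if "w \<in> A1" for w
    using that by (auto simp: A1_def complex_nonpos_Reals_iff)
  then have "P holomorphic_on A1"
    using holomorphic_on_comp_Ln_over_2pi_i[OF hol, of 1 A1 0] by (simp add: P_def A_def)
  moreover have "P holomorphic_on A2"
  proof (rule holomorphic_transform)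
    have "w \<in> A \<and> - 1 * w \<notin> \<real>\<^sub>\<le>\<^sub>0" if "w \<in> A2" for w
      using that by (auto simp: A2_def complex_nonpos_Reals_iff)
    then show "Q holomorphic_on A2"
      using holomorphic_on_comp_Ln_over_2pi_i[OF hol, of "- 1" A2 "1 / 2"]
      by (simp add: Q_def A_def)
    fix w assume "w \<in> A2"
    then have "w \<in> A" "- w \<in> A" by (auto simp: A2_def A_def annulus_def)
    have "exp (2 * pi * \<i> * (Ln (- w) / (2 * pi * \<i>) + 1 / 2)) = - w * exp (pi * \<i>)"
      using A_nz[OF \<open>- w \<in> A\<close>] by (simp add: distrib_left exp_add)
    also have "\<dots> = exp (2 * pi * \<i> * (Ln w / (2 * pi * \<i>)))"
      using A_nz[OF \<open>w \<in> A\<close>] by simp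
    finally show "Q w = P w"
      unfolding P_def Q_def using Ln_in_strip[OF \<open>- w \<in> A\<close>]
      by (intro periodic_eq_if_exp_eq[where g = g, OF per]) (auto simp: strip_def)
  qed
  moreover have "A = A1 \<union> A2"
    using A_nz by (auto simp: A1_def A2_def complex_eq_iff)
  ultimately show "P holomorphic_on annulus (exp (- 2 * pi * b)) (exp (2 * pi * b))"
    using holomorphic_on_Un \<open>open A1\<close> \<open>open A2\<close> by (metis A_def)
qed

lemma deriv_eq_deriv_factor_exp:
  fixes g P :: "complex \<Rightarrow> complex"
  assumes "P holomorphic_on S" "open S" "exp (2 * pi * \<i> * z) \<in> S"
    and "open T" "z \<in> T" "\<And>u. u \<in> T \<Longrightarrow> g u = P (exp (2 * pi * \<i> * u))"
  shows "deriv g z = deriv P (exp (2 * pi * \<i> * z)) * (2 * pi * \<i> * exp (2 * pi * \<i> * z))"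
proof -
  define E where "E = (\<lambda>u. exp (2 * pi * \<i> * u))"
  have "\<forall>\<^sub>F u in nhds z. g u = (P \<circ> E) u"
    using eventually_nhds_in_open[OF assms(4,5)] by eventually_elim (simp add: assms(6) E_def)
  then have "deriv g z = deriv (P \<circ> E) z" by (rule deriv_cong_ev) simp
  also have "\<dots> = deriv P (E z) * deriv E z"
  proof (rule deriv_chain)
    show "E field_differentiable at z"
      unfolding E_def by (intro holomorphic_on_imp_differentiable_at[of _ UNIV] holomorphic_intros) auto
    show "P field_differentiable at (E z)"
      using assms(1-3) holomorphic_on_imp_differentiable_at by (simp add: E_def)
  qed
  also have "deriv E z = 2 * pi * \<i> * E z"
    unfolding E_def by (rule DERIV_imp_deriv) (auto intro!: derivative_eq_intros)
  finally show ?thesis by (simp add: E_def)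
qed

lemma annulus_kernel_le:
  fixes r m R :: real
  assumes "0 < r" "2 * m \<le> R" "2 * r \<le> m"
  shows "m * (R / (R - m)^2 + r / (m - r)^2) \<le> 4 * (m / R + r / m)"
proof -
  have "m * R / (R - m)^2 \<le> m * R / (R / 2)^2"
    using assms by (intro divide_left_mono power_mono) auto
  also have "\<dots> = 4 * (m / R)" using assms by (simp add: power2_eq_square field_simps)
  finally have "m * (R / (R - m)^2) \<le> 4 * (m / R)" by simp
  moreover have "m * r / (m - r)^2 \<le> m * r / (m / 2)^2"
    using assms by (intro divide_left_mono power_mono) auto
  moreover have "m * r / (m / 2)^2 = 4 * (r / m)" using assms by (simp add: power2_eq_square field_simps)
  ultimately show ?thesis by (simp add: distrib_left)
qed

lemma annulus_kernel_exp_le: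
  fixes y B :: real
  assumes y: "\<bar>y\<bar> \<le> B - 1"
  defines "m \<equiv> exp (- 2 * pi * y)" and "r \<equiv> exp (- 2 * pi * B)" and "R \<equiv> exp (2 * pi * B)"
  shows "r < m" "m < R" "m * (R / (R - m)^2 + r / (m - r)^2) \<le> 8 * exp (- 2 * pi * (B - \<bar>y\<bar>))"
proof -
  define q where "q = exp (- 2 * pi * (B - \<bar>y\<bar>))"
  have "2 * pi * y \<le> 2 * pi * \<bar>y\<bar>" "2 * pi * (- y) \<le> 2 * pi * \<bar>y\<bar>"
    using pi_gt_zero by (intro mult_left_mono; simp)+
  then have "m / R \<le> q" "r / m \<le> q"
    by (auto simp: m_def q_def R_def r_def right_diff_distrib simp flip: exp_diff)
  moreover have "2 * q \<le> 1"
  proof -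
    have "1 \<le> 2 * pi * (B - \<bar>y\<bar>)" using y pi_gt3 mult_mono[of 1 "2 * pi" 1 "B - \<bar>y\<bar>"] by simp
    then have "2 \<le> exp (2 * pi * (B - \<bar>y\<bar>))" using exp_ge_add_one_self[of "2 * pi * (B - \<bar>y\<bar>)"] by linarith
    then have "q * 2 \<le> q * exp (2 * pi * (B - \<bar>y\<bar>))" by (simp add: q_def)
    also have "\<dots> = 1" by (simp add: q_def flip: exp_add)
    finally show ?thesis by simp
  qed
  moreover have "0 < r" "0 < R" "0 < m" by (simp_all add: r_def R_def m_def)
  ultimately have "m \<le> q * R" "r \<le> q * m" "2 * q * R \<le> R" "2 * q * m \<le> m"
    using mult_right_mono[of "2 * q" 1] by (auto simp: divide_le_eq)
  then have "2 * m \<le> R" "2 * r \<le> m" by linarith+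
  then show "r < m" "m < R" using \<open>0 < r\<close> \<open>0 < m\<close> by linarith+
  have "m * (R / (R - m)^2 + r / (m - r)^2) \<le> 4 * (m / R + r / m)"
    using annulus_kernel_le \<open>0 < r\<close> \<open>2 * m \<le> R\<close> \<open>2 * r \<le> m\<close> by blast
  also have "\<dots> \<le> 8 * q" using \<open>m / R \<le> q\<close> \<open>r / m \<le> q\<close> by simp
  finally show "m * (R / (R - m)^2 + r / (m - r)^2) \<le> 8 * exp (- 2 * pi * (B - \<bar>y\<bar>))"
    by (simp add: q_def)
qed

lemma norm_factor_le_on_circles:
  assumes factor: "\<And>z. z \<in> strip b \<Longrightarrow> g z = P (exp (2 * pi * \<i> * z))"
    and "0 < B" "B < b" and bd: "\<And>z. \<bar>Im z\<bar> = B \<Longrightarrow> cmod (g z) \<le> M"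
    and \<zeta>: "cmod \<zeta> = exp (- 2 * pi * B) \<or> cmod \<zeta> = exp (2 * pi * B)"
  shows "cmod (P \<zeta>) \<le> M"
proof -
  have "\<zeta> \<noteq> 0" using \<zeta> by auto
  define u where "u = Ln \<zeta> / (2 * pi * \<i>)"
  have "Im u = - ln (cmod \<zeta>) / (2 * pi)"
    using Im_Ln_over_2pi_i[OF \<open>\<zeta> \<noteq> 0\<close>] by (simp add: u_def)
  then have "\<bar>Im u\<bar> = B"
    using \<zeta> pi_gt_zero \<open>0 < B\<close> by auto
  moreover have "g u = P \<zeta>"
    using factor[of u] \<open>\<zeta> \<noteq> 0\<close> \<open>B < b\<close> \<open>\<bar>Im u\<bar> = B\<close> by (simp add: u_def strip_def)
  ultimately show ?thesis using bd by metis
qed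

lemma norm_deriv_le_of_periodic_strip:
  fixes g :: "complex \<Rightarrow> complex"
  assumes hol: "g holomorphic_on strip b" and per: "\<And>z. z \<in> strip b \<Longrightarrow> g (z + 1) = g z"
    and "B < b" and bd: "\<And>z. \<bar>Im z\<bar> = B \<Longrightarrow> cmod (g z) \<le> M" and z: "\<bar>Im z\<bar> \<le> B - 1"
  shows "cmod (deriv g z) \<le> 16 * pi * M * exp (- 2 * pi * (B - \<bar>Im z\<bar>))"
proof -
  define A where "A = annulus (exp (- 2 * pi * b)) (exp (2 * pi * b))"
  obtain P where holP: "P holomorphic_on A"
    and factor: "\<And>z. z \<in> strip b \<Longrightarrow> g z = P (exp (2 * pi * \<i> * z))"
    using periodic_holomorphic_factor_exp[OF hol per] unfolding A_def by blast
  define w where "w = exp (2 * pi * \<i> * z)"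
  define r where "r = exp (- 2 * pi * B)"
  define R where "R = exp (2 * pi * B)"
  have w: "cmod w = exp (- 2 * pi * Im z)" by (simp add: w_def)
  note kernel = annulus_kernel_exp_le[OF z, folded w r_def R_def]
  have "1 \<le> B" "0 < r" using z by (simp_all add: r_def)
  have "\<bar>Im (\<i> * B)\<bar> = B" using \<open>1 \<le> B\<close> by simp
  then have "0 \<le> M" using bd norm_ge_zero order_trans by blast
  have "exp (- 2 * pi * b) < r" "R < exp (2 * pi * b)"
    using \<open>B < b\<close> pi_gt_zero by (simp_all add: r_def R_def)
  then have closed_annulus: "\<zeta> \<in> A" if "r \<le> cmod \<zeta>" "cmod \<zeta> \<le> R" for \<zeta>
    using that by (auto simp: A_def annulus_def)
  have circles: "cmod (P \<zeta>) \<le> M" if "cmod \<zeta> = r \<or> cmod \<zeta> = R" for \<zeta>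
    using norm_factor_le_on_circles[where g = g and P = P, OF factor _ \<open>B < b\<close> bd] that \<open>1 \<le> B\<close>
    by (simp add: r_def R_def)
  have "z \<in> strip b" using z \<open>B < b\<close> by (simp add: strip_def)
  then have "deriv g z = deriv P w * (2 * pi * \<i> * w)"
    unfolding w_def using closed_annulus kernel(1,2) factor
    by (intro deriv_eq_deriv_factor_exp[OF holP]) (auto simp: A_def open_annulus open_strip w_def)
  have "cmod (deriv P w) \<le> M * (R / (R - cmod w)^2 + r / (cmod w - r)^2)"
    using norm_deriv_le_annulus[OF holP _ \<open>0 < r\<close> kernel(1,2) closed_annulus circles]
    by (simp add: A_def open_annulus)
  note dP = mult_left_mono[OF this norm_ge_zero[of w]]
  have "cmod (deriv g z) = 2 * pi * (cmod w * cmod (deriv P w))"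
    using \<open>deriv g z = deriv P w * (2 * pi * \<i> * w)\<close> by (simp add: norm_mult)
  also have "\<dots> \<le> 2 * pi * (M * (cmod w * (R / (R - cmod w)^2 + r / (cmod w - r)^2)))"
    using dP pi_gt_zero by (intro mult_left_mono) (simp_all add: mult_ac)
  also have "\<dots> \<le> 2 * pi * (M * (8 * exp (- 2 * pi * (B - \<bar>Im z\<bar>))))"
    using kernel(3) \<open>0 \<le> M\<close> pi_gt_zero by (intro mult_left_mono) auto
  finally show ?thesis by simp
qed

lemma deriv_periodic:
  fixes f :: "complex \<Rightarrow> complex"
  assumes hol: "f holomorphic_on strip b"
    and equiv: "\<And>z. z \<in> strip b \<Longrightarrow> f (z + 1) = f z + 1"
    and z: "z \<in> strip b"
  shows "deriv f (z + 1) = deriv f z"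
proof -
  have "z + 1 \<in> strip b" using add_of_int_in_strip[OF z, of 1] by simp
  then have "(f has_field_derivative deriv f (z + 1)) (at (z + 1))"
    using hol open_strip holomorphic_on_imp_differentiable_at
    by (simp add: DERIV_deriv_iff_field_differentiable)
  then have "((\<lambda>x. f x + 1) has_field_derivative deriv f (z + 1)) (at z)"
    unfolding DERIV_shift
    by (rule has_field_derivative_transform_within_open[OF _ open_strip z]) (simp add: equiv)
  then have "(f has_field_derivative deriv f (z + 1)) (at z)"
    using DERIV_add[OF _ DERIV_const[of "-1" "at z"]] by fastforce
  then show ?thesis by (rule DERIV_imp_deriv[symmetric])
qed

text \<open>By Bloch's theorem \<open>f\<close> maps the disc of radius \<open>1/2\<close> about \<open>z\<close> onto a set containing
  a disc of radius \<open>\<bar>f' z\<bar> / 24\<close>. If that radius exceeds \<open>1/2\<close>, the disc contains two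
  points \<open>c \<plusminus> 1/2\<close>, whose preimages \<open>p, q\<close> satisfy \<open>p = q + 1\<close> by equivariance and
  injectivity, although \<open>\<bar>p - q\<bar> < 1\<close>.\<close>

lemma norm_deriv_le_12_if_inj_on_strip:
  fixes f :: "complex \<Rightarrow> complex"
  assumes hol: "f holomorphic_on strip b"
    and inj: "inj_on f (strip b)"
    and equiv: "\<And>z. z \<in> strip b \<Longrightarrow> f (z + 1) = f z + 1"
    and z: "\<bar>Im z\<bar> \<le> b - 1 / 2"
  shows "cmod (deriv f z) \<le> 12"
proof (rule ccontr)
  assume "\<not> cmod (deriv f z) \<le> 12"
  then have radius: "1 / 2 < cmod (deriv f z) / 24" by simp
  have disc: "ball z (1 / 2) \<subseteq> strip b"
  proof
    fix x assume "x \<in> ball z (1 / 2)"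
    then have "\<bar>Im z - Im x\<bar> < 1 / 2"
      using abs_Im_le_cmod[of "z - x"] by (simp add: dist_norm)
    then have "Im x < Im z + 1 / 2" "Im z - 1 / 2 < Im x" unfolding abs_less_iff by linarith+
    with z show "x \<in> strip b" by (simp add: strip_def abs_less_iff abs_le_iff)
  qed
  obtain c where c: "ball c (cmod (deriv f z) / 24) \<subseteq> f ` ball z (1 / 2)"
    using Bloch[of f z "1 / 2" "cmod (deriv f z) / 24"] holomorphic_on_subset[OF hol disc] by auto
  have "c + 1 / 2 \<in> f ` ball z (1 / 2)" "c - 1 / 2 \<in> f ` ball z (1 / 2)"
    using radius c by (auto simp: dist_norm)
  then obtain p q where p: "p \<in> ball z (1 / 2)" "f p = c + 1 / 2"
    and q: "q \<in> ball z (1 / 2)" "f q = c - 1 / 2"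
    by (metis imageE)
  have "q \<in> strip b" "p \<in> strip b" using p q disc by auto
  moreover have "f (q + 1) = f p" using equiv[OF \<open>q \<in> strip b\<close>] p q by simp
  ultimately have "p = q + 1"
    using inj add_of_int_in_strip[of q b 1] by (simp add: inj_on_eq_iff)
  moreover have "cmod (p - q) < 1"
    using norm_triangle_ineq[of "p - z" "z - q"] p(1) q(1) by (simp add: dist_norm norm_minus_commute)
  ultimately show False by simp
qed

lemma C2_lower_bound: "192 * pi * exp pi \<le> C2"
proof -
  have "7 \<le> exp (2 * pi)" using exp_ge_add_one_self[of "2 * pi"] pi_gt3 by linarith
  then have "7 * 7 \<le> exp (2 * pi) * exp (2 * pi)" by (intro mult_mono) auto
  then have "24 \<le> exp (4 * pi)" by (simp flip: exp_add)
  then have "192 * pi * exp pi \<le> 8 * pi * (exp (4 * pi) * exp pi)"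
    using pi_gt_zero mult_right_mono[of 24 "exp (4 * pi)" "8 * pi * exp pi"]
    by (simp add: algebra_simps)
  also have "\<dots> = 8 * pi * exp (5 * pi)" by (simp flip: exp_add)
  also have "\<dots> \<le> C2" using pi_gt_zero by (simp add: C2_def C1_def)
  finally show ?thesis .
qed

theorem lemma6p6:
  fixes f :: "complex \<Rightarrow> complex" and b :: real
  assumes "b > 3"
    and "f holomorphic_on strip b"
    and "inj_on f (strip b)"
    and "f 0 = 0"
    and "\<And>z. z \<in> strip b \<Longrightarrow> f (z + 1) = f z + 1"
  shows "\<forall>z \<in> strip (b - 3).
           cmod (deriv (deriv f) z) \<le> C2 * exp (2 * pi * (\<bar>Im z\<bar> - b))"
proof
  fix z assume "z \<in> strip (b - 3)"
  then have z: "\<bar>Im z\<bar> \<le> (b - 1 / 2) - 1" by (simp add: strip_def)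
  have periodic: "deriv f (u + 1) = deriv f u" if "u \<in> strip b" for u
    using deriv_periodic[OF assms(2,5) that] .
  have bounded: "cmod (deriv f u) \<le> 12" if "\<bar>Im u\<bar> = b - 1 / 2" for u
    using norm_deriv_le_12_if_inj_on_strip[OF assms(2,3,5)] that by simp
  have "cmod (deriv (deriv f) z) \<le> 16 * pi * 12 * exp (- 2 * pi * ((b - 1 / 2) - \<bar>Im z\<bar>))"
    using norm_deriv_le_of_periodic_strip[OF holomorphic_deriv[OF assms(2) open_strip] periodic _ bounded z]
    by simp
  also have "\<dots> = 192 * pi * exp pi * exp (2 * pi * (\<bar>Im z\<bar> - b))"
    by (simp add: mult.assoc flip: exp_add) (simp add: algebra_simps)
  also have "\<dots> \<le> C2 * exp (2 * pi * (\<bar>Im z\<bar> - b))"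
    using C2_lower_bound by (rule mult_right_mono) simp
  finally show "cmod (deriv (deriv f) z) \<le> C2 * exp (2 * pi * (\<bar>Im z\<bar> - b))" .
qed

end
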